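(* Let $H$ be an abelian group with an alternating $\mathbb{Z}$-bilinear form $\langle-,-\rangle\neq0$, and let $z\in\ker\mu$. Then the composition \[ Z_2(\mathbb{Q}[H^{(1)}])_{(z)}\longrightarrow C_2(\mathbb{Q}[H])_{(z)}\longrightarrow \hat C_2(\mathbb{Q}[H])_{(z)}\longrightarrow \mathbb{Q}\otimes_{\mathbb{Z}}(H/\mathbb{Z}z) \] is surjective, where the first map is induced by inclusion, the second is the quotient projection, and the third is the isomorphism induced by $[u]\wedge[v]\mapsto 1\otimes\bar u$ (for $u+v=z$).
   Context: $\mu:H\to\mathrm{Hom}_{\mathbb{Z}}(H,\mathbb{Z})$, $\mu(x)(y)=\langle x,y\rangle$; $H^{(1)}:=H\setminus\ker\mu$. $\mathbb{Q}[S]$ ($S\subset H$) is the $\mathbb{Q}$-vector space with basis symbols $[x]$, $x\in S$; $\mathbb{Q}[H]$ is a Lie algebra via $[[x],[y]]=\langle x,y\rangle[x+y]$ and $\mathbb{Q}[H^{(1)}]$ is a Lie subalgebra. Chevalley–Eilenberg chains $C_p(\mathfrak g)=\bigwedge^p_{\mathbb{Q}}\mathfrak g$ with the standard boundary. For $S\in\{H,H^{(1)}\}$, $C_2(\mathbb{Q}[S])_{(w)}$ is the span of $[u_1]\wedge[u_2]$ with $u_i\in S$, $u_1+u_2=w$, and $Z_2(\mathbb{Q}[S])_{(w)}$ its cycles. $\hat I$ is the ideal of $\bigwedge\mathbb{Q}[H]$ generated by all $[u+v]\wedge[x]-[u]\wedge[x+v]-[v]\wedge[x+u]$, $u,v,x\in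 H$; $\hat C_2(\mathbb{Q}[H])_{(z)}=C_2(\mathbb{Q}[H])_{(z)}/(\hat I\cap C_2(\mathbb{Q}[H])_{(z)})$, which is isomorphic to $\mathbb{Q}\otimes(H/\mathbb{Z}z)$ via $[u]\wedge[z-u]\mapsto 1\otimes\bar u$. *)

theory Defs
  imports Complex_Main
begin

definition alt_bilinear :: "('a::ab_group_add \<Rightarrow> 'a \<Rightarrow> int) \<Rightarrow> bool" where
  "alt_bilinear B \<longleftrightarrow>
     (\<forall>x y w. B (x + y) w = B x w + B y w) \<and>
     (\<forall>x y w. B x (y + w) = B x y + B x w) \<and>
     (\<forall>x. B x x = 0)"

text \<open>ker mu, where mu(x)(y) = B x y, and H^(1) = H minus ker mu.\<close>
definition ker_mu :: "('a \<Rightarrow> 'a \<Rightarrow> int) \<Rightarrow> 'a set" where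
  "ker_mu B = {x. \<forall>y. B x y = 0}"

definition H1 :: "('a \<Rightarrow> 'a \<Rightarrow> int) \<Rightarrow> 'a set" where
  "H1 B = UNIV - ker_mu B"

text \<open>Elements of Q[H] are finitely supported functions H -> Q (coefficient of [x] at x).
  Elements of C_2(Q[H]) = Wedge^2 Q[H] are finitely supported antisymmetric functions
  f : H x H -> Q; the element [x] wedge [y] is the function with value 1 at (x,y) and -1 at (y,x),
  and a general f equals (1/2) * sum over ordered pairs (x,y) of f(x,y) [x] wedge [y].\<close>

definition fin_supp :: "('b \<Rightarrow> rat) \<Rightarrow> bool" where
  "fin_supp f \<longleftrightarrow> finite {p. f p \<noteq> 0}"

definition wedge :: "'a \<Rightarrow> 'a \<Rightarrow> ('a \<times> 'a \<Rightarrow> rat)" where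
  "wedge x y = (\<lambda>p. (if p = (x, y) then 1 else 0) - (if p = (y, x) then 1 else 0))"

text \<open>C_2(Q[S])_(w): span of [u1] wedge [u2] with u1, u2 in S, u1 + u2 = w.\<close>
definition C2w :: "'a::ab_group_add set \<Rightarrow> 'a \<Rightarrow> ('a \<times> 'a \<Rightarrow> rat) set" where
  "C2w S w = {f. fin_supp f \<and> (\<forall>x y. f (x, y) = - f (y, x)) \<and>
                (\<forall>p. f p \<noteq> 0 \<longrightarrow> fst p \<in> S \<and> snd p \<in> S \<and> fst p + snd p = w)}"

text \<open>Chevalley--Eilenberg boundary C_2 -> C_1 for the Lie algebra Q[H] with
  [[x],[y]] = B x y [x+y]:  d([x] wedge [y]) = - [[x],[y]], extended linearly.\<close>
definition ce_d2 :: "('a::ab_group_add \<Rightarrow> 'a \<Rightarrow> int) \<Rightarrow> ('a \<times> 'a \<Rightarrow> rat) \<Rightarrow> ('a \<Rightarrow> rat)" where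
  "ce_d2 B f = (\<lambda>w. - (1/2) * (\<Sum>p\<in>{p. f p \<noteq> 0 \<and> fst p + snd p = w}.
                                   f p * of_int (B (fst p) (snd p))))"

text \<open>Z_2(Q[S])_(w): the cycles in C_2(Q[S])_(w).  (For S = H^(1), the boundary of the
  subalgebra Q[H^(1)] is the restriction of that of Q[H].)\<close>
definition Z2w :: "('a::ab_group_add \<Rightarrow> 'a \<Rightarrow> int) \<Rightarrow> 'a set \<Rightarrow> 'a \<Rightarrow> ('a \<times> 'a \<Rightarrow> rat) set" where
  "Z2w B S w = {f \<in> C2w S w. ce_d2 B f = (\<lambda>_. 0)}"

definition int_mult :: "int \<Rightarrow> 'a::ab_group_add \<Rightarrow> 'a" where
  "int_mult k z = (if 0 \<le> k then (\<Sum>i<nat k. z) else - (\<Sum>i<nat (- k). z))"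

definition qspan :: "('b \<Rightarrow> rat) set \<Rightarrow> ('b \<Rightarrow> rat) set" where
  "qspan G = {v. \<exists>F c. finite F \<and> F \<subseteq> G \<and> v = (\<lambda>x. \<Sum>g\<in>F. c g * g x)}"

definition delta :: "'a \<Rightarrow> 'a \<Rightarrow> rat" where
  "delta a = (\<lambda>x. if x = a then 1 else 0)"

text \<open>Q tensor_Z A = Q^(A) / span{[a+b]-[a]-[b]}, with A = H/Zz, where Q^(H/Zz) is
  presented as Q^(H) / span{[a]-[b] : a - b in Zz}.  So Q tensor_Z (H/Zz) is the quotient
  of the finitely supported functions H -> Q by qspan (tensor_rel z); the class of
  delta u is 1 tensor (u mod Zz).\<close>
definition tensor_rel :: "'a::ab_group_add \<Rightarrow> ('a \<Rightarrow> rat) set" where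
  "tensor_rel z =
     {delta (a + b) - delta a - delta b | a b. True} \<union>
     {delta a - delta b | a b. \<exists>k. a - b = int_mult k z}"

text \<open>The composite C_2(Q[H])_(z) -> hat C_2(Q[H])_(z) -> Q tensor (H/Zz), i.e. the linear
  extension of [u] wedge [z-u] |-> 1 tensor (u mod Zz), lifted to Q^(H):
  f = (1/2) sum f(x,y) [x] wedge [y]  |->  (1/2) sum f(x,y) delta x.\<close>
definition tensor_map :: "('a \<times> 'a \<Rightarrow> rat) \<Rightarrow> ('a \<Rightarrow> rat)" where
  "tensor_map f = (\<lambda>u. (1/2) * (\<Sum>p\<in>{p. f p \<noteq> 0 \<and> fst p = u}. f p))"

end

theory Submission
  imports Defs "HOL-Library.Function_Algebras"
begin

text \<open>Since z lies in ker \<mu>, the bracket of [u] and [z - u] vanishes, so every chain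
  \<Sum>_u h(u) [u] \<and> [z - u] supported in H^(1) is a cycle; its image is the class of
  \<Sum>_u h(u) [u], and h is odd under u \<mapsto> z - u. Modulo the relations [u] + [z - u] \<equiv> [z] \<equiv> 0,
  so [u] \<equiv> (1/2) ([u] - [z - u]) lies in the image for every u in H^(1). For u in ker \<mu> write
  [u] \<equiv> [u - v] + [v] with some v in H^(1), which exists because the form is nonzero.\<close>

lemma alt_bilinearD:
  assumes "alt_bilinear B"
  shows "B (x + y) w = B x w + B y w" "B x (y + w) = B x y + B x w" "B x x = 0"
  using assms unfolding alt_bilinear_def by simp_all

lemma alt_bilinear_antisym:
  assumes "alt_bilinear B" shows "B y x = - B x y"
proof -
  have "B (x + y) (x + y) = B x x + B x y + (B y x + B y y)"
    by (simp only: alt_bilinearD(1,2)[OF assms])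
  then show ?thesis by (simp add: alt_bilinearD(3)[OF assms])
qed

lemma alt_bilinear_diff_left:
  assumes "alt_bilinear B" shows "B (x - y) w = B x w - B y w"
  using alt_bilinearD(1)[OF assms, of "x - y" y w] by simp

lemma ker_mu_pair_zero:
  assumes "alt_bilinear B" "z \<in> ker_mu B" "u + v = z"
  shows "B u v = 0"
proof -
  have "B u v = B u (u + v)" by (simp add: alt_bilinearD[OF assms(1)])
  also have "\<dots> = - B z u" unfolding assms(3) by (rule alt_bilinear_antisym[OF assms(1)])
  finally show ?thesis using assms(2) by (simp add: ker_mu_def)
qed

lemma ker_mu_diff_H1:
  assumes "alt_bilinear B" "x \<in> ker_mu B" "v \<in> H1 B"
  shows "x - v \<in> H1 B"
proof -
  have "x - v \<notin> ker_mu B"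
  proof
    assume "x - v \<in> ker_mu B"
    moreover have "B v w = B x w - B (x - v) w" for w
      using alt_bilinear_diff_left[OF assms(1), of x "x - v" w] by simp
    ultimately have "B v w = 0" for w
      using assms(2) by (simp add: ker_mu_def)
    then show False using assms(3) by (simp add: H1_def ker_mu_def)
  qed
  then show ?thesis by (simp add: H1_def)
qed

lemma add_eq_iff_eq_diff: "u + v = z \<longleftrightarrow> v = z - (u::'a::ab_group_add)"
  by (auto simp: eq_diff_eq add.commute)

lemma sum_fun_apply: "(\<Sum>a\<in>A. f a) x = (\<Sum>a\<in>A. f a x)"
  by (induction A rule: infinite_finite_induct) auto

interpretation rat_fun: vector_space "\<lambda>(r::rat) (f::'b \<Rightarrow> rat) x. r * f x"
  by standard (simp_all add: fun_eq_iff algebra_simps)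

lemma sum_fun_eq: "(\<Sum>a\<in>A. f a) = (\<lambda>x. \<Sum>a\<in>A. f a x)"
  by (simp add: fun_eq_iff sum_fun_apply)

lemma qspan_eq_span: "qspan G = rat_fun.span G"
  unfolding qspan_def rat_fun.span_explicit sum_fun_eq by auto

lemma fin_supp_in_span_delta:
  assumes "fin_supp g" shows "g \<in> rat_fun.span (range delta)"
proof -
  have "g = (\<Sum>x | g x \<noteq> 0. (\<lambda>w. g x * delta x w))"
  proof
    fix w
    have "(\<Sum>x | g x \<noteq> 0. (\<lambda>w. g x * delta x w)) w = (\<Sum>x | g x \<noteq> 0. if w = x then g x else 0)"
      by (auto simp: sum_fun_apply delta_def intro!: sum.cong)
    also have "\<dots> = g w"
      using assms by (simp add: fin_supp_def)
    finally show "g w = (\<Sum>x | g x \<noteq> 0. (\<lambda>w. g x * delta x w)) w" by simp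
  qed
  also have "\<dots> \<in> rat_fun.span (range delta)"
  proof (rule rat_fun.span_sum)
    fix x
    show "(\<lambda>w. g x * delta x w) \<in> rat_fun.span (range delta)"
      by (rule rat_fun.span_scale[OF rat_fun.span_base]) simp
  qed
  finally show ?thesis .
qed

definition odd_H1 :: "('a::ab_group_add \<Rightarrow> 'a \<Rightarrow> int) \<Rightarrow> 'a \<Rightarrow> ('a \<Rightarrow> rat) set" where
  "odd_H1 B z = {h. fin_supp h \<and> (\<forall>y. h y \<noteq> 0 \<longrightarrow> y \<in> H1 B) \<and> (\<forall>y. h (z - y) = - h y)}"

lemma subspace_odd_H1: "rat_fun.subspace (odd_H1 B z)"
  unfolding rat_fun.subspace_def
proof (intro conjI ballI allI)
  show "0 \<in> odd_H1 B z" by (simp add: odd_H1_def fin_supp_def)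
next
  fix f g assume "f \<in> odd_H1 B z" "g \<in> odd_H1 B z"
  moreover have "{y. f y + g y \<noteq> 0} \<subseteq> {y. f y \<noteq> 0} \<union> {y. g y \<noteq> 0}" by auto
  ultimately show "f + g \<in> odd_H1 B z"
    unfolding odd_H1_def fin_supp_def by (auto intro: finite_subset)
next
  fix c :: rat and f assume "f \<in> odd_H1 B z"
  moreover have "{y. c * f y \<noteq> 0} \<subseteq> {y. f y \<noteq> 0}" by auto
  ultimately show "(\<lambda>x. c * f x) \<in> odd_H1 B z"
    unfolding odd_H1_def fin_supp_def by (auto intro: finite_subset)
qed

lemma half_delta_reflect_in_odd_H1:
  assumes "alt_bilinear B" "z \<in> ker_mu B" "y \<in> H1 B"
  shows "(\<lambda>w. (delta y w - delta (z - y) w) / 2) \<in> odd_H1 B z"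
proof -
  have "{w. (delta y w - delta (z - y) w) / 2 \<noteq> 0} \<subseteq> {y, z - y}"
    by (auto simp: delta_def)
  then have "fin_supp (\<lambda>w. (delta y w - delta (z - y) w) / 2)"
    unfolding fin_supp_def by (rule finite_subset) simp
  then show ?thesis
    using assms(3) ker_mu_diff_H1[OF assms] by (auto simp: odd_H1_def delta_def)
qed

text \<open>odd_chain z h is the chain \<Sum>_u h(u) [u] \<and> [z - u]; the factor 2 comes from encoding a chain f
  as (1/2) \<Sum> f(x, y) [x] \<and> [y] over ordered pairs.\<close>
definition odd_chain :: "'a::ab_group_add \<Rightarrow> ('a \<Rightarrow> rat) \<Rightarrow> 'a \<times> 'a \<Rightarrow> rat" where
  "odd_chain z h = (\<lambda>(u, v). if u + v = z then 2 * h u else 0)"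

lemma tensor_map_odd_chain: "tensor_map (odd_chain z h) = h"
proof
  fix u
  have "{p. odd_chain z h p \<noteq> 0 \<and> fst p = u} = (if h u = 0 then {} else {(u, z - u)})"
    by (auto simp: odd_chain_def add_eq_iff_eq_diff split: if_splits)
  then show "tensor_map (odd_chain z h) u = h u"
    by (simp add: tensor_map_def odd_chain_def)
qed

lemma odd_chain_in_C2w:
  assumes "h \<in> odd_H1 B z" shows "odd_chain z h \<in> C2w (H1 B) z"
proof -
  have odd: "h (z - y) = - h y" and supp: "h y \<noteq> 0 \<Longrightarrow> y \<in> H1 B" and fin: "fin_supp h" for y
    using assms by (auto simp: odd_H1_def)
  have "{p. odd_chain z h p \<noteq> 0} \<subseteq> (\<lambda>u. (u, z - u)) ` {u. h u \<noteq> 0}"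
    by (auto simp: odd_chain_def add_eq_iff_eq_diff split: if_splits)
  then have "fin_supp (odd_chain z h)"
    using fin unfolding fin_supp_def by (rule finite_subset[OF _ finite_imageI])
  moreover have "odd_chain z h (u, v) = - odd_chain z h (v, u)" for u v
  proof (cases "u + v = z")
    case True
    then have "v = z - u" "v + u = z" by (simp_all add: add_eq_iff_eq_diff add.commute)
    then show ?thesis using True odd[of u] by (simp add: odd_chain_def)
  next
    case False
    then have "v + u \<noteq> z" by (simp add: add.commute)
    then show ?thesis using False by (simp add: odd_chain_def)
  qed
  moreover have "fst p \<in> H1 B \<and> snd p \<in> H1 B \<and> fst p + snd p = z" if "odd_chain z h p \<noteq> 0" for p
  proof -
    obtain u v where p: "p = (u, v)" by fastforce
    have "u + v = z" "h u \<noteq> 0" using that by (auto simp: p odd_chain_def split: if_splits)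
    moreover from \<open>u + v = z\<close> have "v = z - u" by (simp add: add_eq_iff_eq_diff)
    ultimately show ?thesis using odd[of u] supp p by auto
  qed
  ultimately show ?thesis unfolding C2w_def by blast
qed

lemma Z2w_eq_C2w:
  assumes "alt_bilinear B" "z \<in> ker_mu B" shows "Z2w B S z = C2w S z"
proof -
  have "ce_d2 B f = (\<lambda>_. 0)" if "f \<in> C2w S z" for f
  proof
    fix w
    have "fst p + snd p = z" if "f p \<noteq> 0" for p
      using \<open>f \<in> C2w S z\<close> that unfolding C2w_def by blast
    then have "B (fst p) (snd p) = 0" if "f p \<noteq> 0" for p
      using that ker_mu_pair_zero[OF assms] by blast
    then show "ce_d2 B f w = 0" by (simp add: ce_d2_def)
  qed
  then show ?thesis unfolding Z2w_def by blast
qed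

lemma odd_H1_subset_tensor_map_Z2w:
  assumes "alt_bilinear B" "z \<in> ker_mu B"
  shows "odd_H1 B z \<subseteq> tensor_map ` Z2w B (H1 B) z"
proof
  fix h assume "h \<in> odd_H1 B z"
  then have "odd_chain z h \<in> Z2w B (H1 B) z"
    using odd_chain_in_C2w Z2w_eq_C2w[OF assms] by blast
  then show "h \<in> tensor_map ` Z2w B (H1 B) z"
    by (metis image_eqI tensor_map_odd_chain)
qed

lemma delta_add_in_span_tensor_rel:
  "delta (a + b) - delta a - delta b \<in> rat_fun.span (tensor_rel z)"
  by (rule rat_fun.span_base) (auto simp: tensor_rel_def)

lemma delta_in_span_tensor_rel: "delta z \<in> rat_fun.span (tensor_rel z)"
proof -
  have "delta z - delta 0 \<in> tensor_rel z"
    unfolding tensor_rel_def by (intro UnI2 CollectI exI[of _ z] exI[of _ 0] conjI refl exI[of _ 1])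
      (simp add: int_mult_def)
  then have "delta z - delta 0 - (delta (0 + 0) - delta 0 - delta 0) \<in> rat_fun.span (tensor_rel z)"
    by (intro rat_fun.span_diff rat_fun.span_base delta_add_in_span_tensor_rel)
  then show ?thesis by simp
qed

lemma delta_reflect_in_span_tensor_rel: "delta y + delta (z - y) \<in> rat_fun.span (tensor_rel z)"
proof -
  have "delta z - (delta (y + (z - y)) - delta y - delta (z - y)) \<in> rat_fun.span (tensor_rel z)"
    by (intro rat_fun.span_diff delta_in_span_tensor_rel delta_add_in_span_tensor_rel)
  then show ?thesis by simp
qed

lemma fin_supp_in_odd_H1_plus_span_tensor_rel:
  assumes "alt_bilinear B" "z \<in> ker_mu B" "v \<in> H1 B" "fin_supp g"
  shows "g \<in> {h + r | h r. h \<in> odd_H1 B z \<and> r \<in> rat_fun.span (tensor_rel z)}" (is "g \<in> ?M")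
proof -
  have M: "rat_fun.subspace ?M"
    by (intro rat_fun.subspace_sums subspace_odd_H1 rat_fun.subspace_span)
  have memI: "h + r \<in> ?M" if "h \<in> odd_H1 B z" "r \<in> rat_fun.span (tensor_rel z)" for h r
    using that by blast
  have span_rel: "r \<in> ?M" if "r \<in> rat_fun.span (tensor_rel z)" for r
    using memI[OF rat_fun.subspace_0[OF subspace_odd_H1] that] by simp
  have delta_H1: "delta y \<in> ?M" if "y \<in> H1 B" for y
  proof -
    have "delta y = (\<lambda>w. (delta y w - delta (z - y) w) / 2) + (\<lambda>w. (1/2) * (delta y + delta (z - y)) w)"
      by (simp add: fun_eq_iff field_simps)
    also have "\<dots> \<in> ?M"
      by (intro memI half_delta_reflect_in_odd_H1[OF assms(1,2) that]
          rat_fun.span_scale[OF delta_reflect_in_span_tensor_rel])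
    finally show ?thesis .
  qed
  have "delta x \<in> ?M" for x
  proof (cases "x \<in> H1 B")
    case False
    then have "x - v \<in> H1 B"
      using ker_mu_diff_H1[OF assms(1) _ assms(3)] by (simp add: H1_def)
    have "delta x = (delta (x - v + v) - delta (x - v) - delta v) + delta (x - v) + delta v"
      by simp
    also have "\<dots> \<in> ?M"
      by (intro rat_fun.subspace_add[OF M] span_rel delta_add_in_span_tensor_rel delta_H1 \<open>x - v \<in> H1 B\<close> assms(3))
    finally show ?thesis .
  qed (rule delta_H1)
  then have "rat_fun.span (range delta) \<subseteq> ?M"
    by (intro rat_fun.span_minimal M) auto
  then show ?thesis using fin_supp_in_span_delta[OF assms(4)] by blast
qed

theorem proposition3p4:
  fixes B :: "'a::ab_group_add \<Rightarrow> 'a \<Rightarrow> int" and z :: 'a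
  assumes "alt_bilinear B"
    and "\<exists>x y. B x y \<noteq> 0"
    and "z \<in> ker_mu B"
  shows "\<forall>g. fin_supp g \<longrightarrow>
           (\<exists>c \<in> Z2w B (H1 B) z. tensor_map c - g \<in> qspan (tensor_rel z))"
proof (intro allI impI)
  fix g :: "'a \<Rightarrow> rat" assume "fin_supp g"
  obtain v w where "B v w \<noteq> 0" using assms(2) by blast
  then have "v \<in> H1 B" by (auto simp: H1_def ker_mu_def)
  then obtain h r where g: "g = h + r" and h: "h \<in> odd_H1 B z" and r: "r \<in> rat_fun.span (tensor_rel z)"
    using fin_supp_in_odd_H1_plus_span_tensor_rel[OF assms(1,3) _ \<open>fin_supp g\<close>] by blast
  obtain c where c: "c \<in> Z2w B (H1 B) z" "tensor_map c = h"
    using odd_H1_subset_tensor_map_Z2w[OF assms(1,3)] h by blast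
  have "tensor_map c - g = - r" using c(2) g by simp
  then have "tensor_map c - g \<in> qspan (tensor_rel z)"
    using r by (simp add: qspan_eq_span rat_fun.span_neg)
  with c(1) show "\<exists>c \<in> Z2w B (H1 B) z. tensor_map c - g \<in> qspan (tensor_rel z)" by blast
qed

end
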